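(* Fix $\tau>0$ and suppose that for every $\lambda\in\Lambda$ the problem $\max_{\pi\in\Pi}\mathcal{L}_\tau(\pi,\lambda)$ has exactly one optimal policy $\pi^*_{\tau,\lambda}$. Then $d_\tau$ is differentiable at every $\lambda\in\Lambda$, and $$\nabla d_\tau(\lambda)=V^{\pi^*_{\tau,\lambda}}(\rho)-c.$$
   Context: Finite MDP with state space $\mathcal S$, action space $\mathcal A$, transition kernel $\mathrm P$, discount $\gamma\in(0,1)$, initial distribution $\rho$, positive finite rewards $r_0,\dots,r_m$. $\Pi$ is the (compact) set of stationary policies. $V_i^\pi(\rho)=\mathbb{E}[\sum_{t\ge0}\gamma^tr_i(s_t,a_t)]$ with $s_0\sim\rho$, $a_t\sim\pi(\cdot\mid s_t)$, $s_{t+1}\sim\mathrm P(\cdot\mid s_t,a_t)$; $V^\pi(\rho)=(V_1^\pi(\rho),\dots,V_m^\pi(\rho))^\top$; $c\in\mathbb{R}^m$. Discounted entropy $\mathcal H(\pi)=-\mathbb{E}[\sum_{t\ge0}\gamma^t\log\pi(a_t\mid s_t)]$ (same dynamics). $\mathcal L_\tau(\pi,\lambda)=V_0^\pi(\rho)+\langle\lambda,V^\pi(\rho)-c\rangle+\tau\mathcal H(\pi)$ for $\lambda\in\mathbb{R}^m$, and $d_\tau(\lambda)=\max_{\pi\in\Pi}\mathcal L_\tau(\pi,\lambda)$. Given $\xi>0$ (the Slater constant: a policy $\pi_\xi$ with $V_i^{\pi_\xi}(\rho)\ge c_i+\xi$ for all $i$), $r_{0,\max}=\max_{s,a}r_0(s,a)$,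 $B_\lambda=\frac{r_{0,\max}+\log|\mathcal A|}{(1-\gamma)\xi}$ and $\Lambda=\{\lambda\in\mathbb{R}^m_+:\|\lambda\|_1\le B_\lambda\}$. *)

theory Defs
  imports "HOL-Analysis.Analysis"
begin

text \<open>Finite MDP: states 's, actions 'a (finite types), constraint index type 'm
 (so lambda, c are vectors in real^'m).  Transition kernel P s a s'.
 Stationary policies are stochastic matrices pi s a.\<close>

definition policies :: "('s::finite \<Rightarrow> 'a::finite \<Rightarrow> real) set" where
  "policies = {\<pi>. (\<forall>s a. 0 \<le> \<pi> s a) \<and> (\<forall>s. (\<Sum>a\<in>UNIV. \<pi> s a) = 1)}"

fun state_dist :: "('s::finite \<Rightarrow> 'a::finite \<Rightarrow> 's \<Rightarrow> real) \<Rightarrow> ('s \<Rightarrow> real)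
    \<Rightarrow> ('s \<Rightarrow> 'a \<Rightarrow> real) \<Rightarrow> nat \<Rightarrow> 's \<Rightarrow> real" where
  "state_dist P \<rho> \<pi> 0 = \<rho>"
| "state_dist P \<rho> \<pi> (Suc t) =
     (\<lambda>s'. \<Sum>s\<in>UNIV. \<Sum>a\<in>UNIV. state_dist P \<rho> \<pi> t s * \<pi> s a * P s a s')"

definition disc_value :: "('s::finite \<Rightarrow> 'a::finite \<Rightarrow> 's \<Rightarrow> real) \<Rightarrow> ('s \<Rightarrow> real) \<Rightarrow> real
    \<Rightarrow> ('s \<Rightarrow> 'a \<Rightarrow> real) \<Rightarrow> ('s \<Rightarrow> 'a \<Rightarrow> real) \<Rightarrow> real" where
  "disc_value P \<rho> \<gamma> \<pi> f =
     (\<Sum>t. \<gamma> ^ t * (\<Sum>s\<in>UNIV. \<Sum>a\<in>UNIV. state_dist P \<rho> \<pi> t s * \<pi> s a * f s a))"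

text \<open>Discounted entropy H(pi) = -E[sum_t gamma^t log pi(a_t|s_t)]
  (terms with pi s a = 0 contribute 0, as they are multiplied by pi s a).\<close>
definition disc_entropy :: "('s::finite \<Rightarrow> 'a::finite \<Rightarrow> 's \<Rightarrow> real) \<Rightarrow> ('s \<Rightarrow> real) \<Rightarrow> real
    \<Rightarrow> ('s \<Rightarrow> 'a \<Rightarrow> real) \<Rightarrow> real" where
  "disc_entropy P \<rho> \<gamma> \<pi> = disc_value P \<rho> \<gamma> \<pi> (\<lambda>s a. - ln (\<pi> s a))"

definition value_vec :: "('s::finite \<Rightarrow> 'a::finite \<Rightarrow> 's \<Rightarrow> real) \<Rightarrow> ('s \<Rightarrow> real) \<Rightarrow> real
    \<Rightarrow> ('m::finite \<Rightarrow> 's \<Rightarrow> 'a \<Rightarrow> real) \<Rightarrow> ('s \<Rightarrow> 'a \<Rightarrow> real) \<Rightarrow> real ^ 'm" where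
  "value_vec P \<rho> \<gamma> r \<pi> = (\<chi> i. disc_value P \<rho> \<gamma> \<pi> (r i))"

definition lagrangian :: "('s::finite \<Rightarrow> 'a::finite \<Rightarrow> 's \<Rightarrow> real) \<Rightarrow> ('s \<Rightarrow> real) \<Rightarrow> real
    \<Rightarrow> ('s \<Rightarrow> 'a \<Rightarrow> real) \<Rightarrow> ('m::finite \<Rightarrow> 's \<Rightarrow> 'a \<Rightarrow> real) \<Rightarrow> real ^ 'm \<Rightarrow> real
    \<Rightarrow> ('s \<Rightarrow> 'a \<Rightarrow> real) \<Rightarrow> real ^ 'm \<Rightarrow> real" where
  "lagrangian P \<rho> \<gamma> r0 r c \<tau> \<pi> lam =
     disc_value P \<rho> \<gamma> \<pi> r0 + inner lam (value_vec P \<rho> \<gamma> r \<pi> - c) + \<tau> * disc_entropy P \<rho> \<gamma> \<pi>"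

definition dual_fun :: "('s::finite \<Rightarrow> 'a::finite \<Rightarrow> 's \<Rightarrow> real) \<Rightarrow> ('s \<Rightarrow> real) \<Rightarrow> real
    \<Rightarrow> ('s \<Rightarrow> 'a \<Rightarrow> real) \<Rightarrow> ('m::finite \<Rightarrow> 's \<Rightarrow> 'a \<Rightarrow> real) \<Rightarrow> real ^ 'm \<Rightarrow> real
    \<Rightarrow> real ^ 'm \<Rightarrow> real" where
  "dual_fun P \<rho> \<gamma> r0 r c \<tau> lam = (SUP \<pi>\<in>policies. lagrangian P \<rho> \<gamma> r0 r c \<tau> \<pi> lam)"

definition Lambda_set :: "real \<Rightarrow> ('s::finite \<Rightarrow> 'a::finite \<Rightarrow> real) \<Rightarrow> real \<Rightarrow> (real ^ 'm::finite) set" where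
  "Lambda_set \<gamma> r0 \<xi> =
     {lam. (\<forall>i. 0 \<le> lam $ i) \<and>
          (\<Sum>i\<in>UNIV. lam $ i) \<le> (Max (range (\<lambda>(s, a). r0 s a)) + ln (real CARD('a)))
                                   / ((1 - \<gamma>) * \<xi>)}"

end

theory Submission
  imports Defs "HOL-Real_Asymp.Real_Asymp"
begin

(* By definition d_tau is the supremum, over the compact set of policies, of the affine functions
   lam |-> phi pi + <lam, V^pi(rho) - c>, where phi pi = V_0^pi(rho) + tau H(pi). Both phi and
   pi |-> V^pi(rho) are continuous: each discounted value is a series whose t-th term is
   continuous in pi (for the entropy because x ln x is continuous on [0,1]) and bounded by
   gamma^t times a constant, so the Weierstrass M-test applies. Danskin's theorem then says that
   a supremum of continuously parametrised affine functions is differentiable wherever the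
   maximiser is unique, with gradient the slope of the maximising function. *)

lemma compact_uniformly_less:
  fixes f :: "'p::topological_space \<Rightarrow> real"
  assumes "compact C" and "continuous_on C f" and "\<And>p. p \<in> C \<Longrightarrow> f p < b"
  shows "\<exists>\<eta>>0. \<forall>p\<in>C. f p + \<eta> \<le> b"
proof (cases "C = {}")
  case False
  then obtain q where "q \<in> C" and "\<forall>p\<in>C. f p \<le> f q"
    using continuous_attains_sup[OF assms(1) False assms(2)] by blast
  with assms(3) show ?thesis by (intro exI[of _ "b - f q"]) force
qed (auto intro: exI[of _ 1])

lemma SUP_affine_upper_estimate:
  fixes \<phi> :: "'p::topological_space \<Rightarrow> real" and g :: "'p \<Rightarrow> 'v::real_inner"
  assumes K: "compact K" and cont_\<phi>: "continuous_on K \<phi>" and cont_g: "continuous_on K g"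
    and p0: "p0 \<in> K"
    and maximal: "\<And>p. p \<in> K \<Longrightarrow> \<phi> p + inner x0 (g p) \<le> \<phi> p0 + inner x0 (g p0)"
    and unique: "\<And>p. p \<in> K \<Longrightarrow> \<phi> p + inner x0 (g p) = \<phi> p0 + inner x0 (g p0) \<Longrightarrow> p = p0"
    and e: "e > 0"
  shows "\<exists>\<delta>>0. \<forall>y. norm (y - x0) < \<delta> \<longrightarrow>
           (SUP p\<in>K. \<phi> p + inner y (g p)) \<le> \<phi> p0 + inner y (g p0) + e * norm (y - x0)"
proof -
  define L where "L p x = \<phi> p + inner x (g p)" for p x
  have L_shift: "L p y = L p0 y + (L p x0 - L p0 x0) + inner (y - x0) (g p - g p0)" for p y
    unfolding L_def by (simp add: algebra_simps inner_commute)
  obtain A where A: "open A" "A \<inter> K = g -` ball (g p0) e \<inter> K"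
    using cont_g unfolding continuous_on_open_invariant by (meson open_ball)
  have "p0 \<in> A" using A p0 e by auto
  then obtain \<eta> where \<eta>: "\<eta> > 0" "\<forall>p\<in>K - A. L p x0 + \<eta> \<le> L p0 x0"
    using compact_uniformly_less[of "K - A" "\<lambda>p. L p x0" "L p0 x0"] K A(1) maximal unique
    unfolding L_def by (force intro: compact_diff continuous_on_subset[of K] continuous_intros
        cont_\<phi> cont_g simp: order_less_le)
  obtain M where M: "M > 0" "\<forall>p\<in>K. norm (g p - g p0) \<le> M"
  proof -
    have "bounded ((\<lambda>p. g p - g p0) ` K)"
      by (intro compact_imp_bounded compact_continuous_image continuous_intros cont_g K)
    then show ?thesis using that unfolding bounded_pos by blast
  qed
  \<comment> \<open>Where g is e-close to g p0 the slope error is at most e |y - x0|; elsewhere the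
    gap \<eta> left by the unique maximiser absorbs it as long as |y - x0| < \<eta> / M.\<close>
  show ?thesis
  proof (intro exI[of _ "\<eta> / M"] conjI allI impI)
    fix y assume y: "norm (y - x0) < \<eta> / M"
    have "L p y \<le> L p0 y + e * norm (y - x0)" if p: "p \<in> K" for p
    proof -
      have CS: "inner (y - x0) (g p - g p0) \<le> norm (y - x0) * norm (g p - g p0)"
        by (rule norm_cauchy_schwarz)
      have "L p x0 \<le> L p0 x0" using maximal p unfolding L_def .
      show ?thesis
      proof (cases "p \<in> A")
        case True
        then have "dist (g p0) (g p) < e" using A p by auto
        then have "norm (g p - g p0) \<le> e" by (simp add: dist_norm norm_minus_commute)
        then have "norm (y - x0) * norm (g p - g p0) \<le> e * norm (y - x0)"
          by (metis mult.commute mult_left_mono norm_ge_zero)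
        with CS \<open>L p x0 \<le> L p0 x0\<close> show ?thesis using L_shift[of p y] by linarith
      next
        case False
        with \<eta> p have "L p x0 + \<eta> \<le> L p0 x0" by blast
        have "norm (y - x0) * norm (g p - g p0) \<le> norm (y - x0) * M"
          using M p by (simp add: mult_left_mono)
        also have "\<dots> \<le> \<eta>" using y M by (simp add: field_simps)
        finally have "inner (y - x0) (g p - g p0) \<le> \<eta>" using CS by linarith
        moreover have "0 \<le> e * norm (y - x0)" using e by simp
        ultimately show ?thesis using \<open>L p x0 + \<eta> \<le> L p0 x0\<close> L_shift[of p y] by linarith
      qed
    qed
    then show "(SUP p\<in>K. \<phi> p + inner y (g p)) \<le> \<phi> p0 + inner y (g p0) + e * norm (y - x0)"
      using p0 unfolding L_def by (intro cSUP_least) auto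
  qed (use \<eta> M in simp)
qed

lemma has_derivative_SUP_affine_unique_max:
  fixes \<phi> :: "'p::topological_space \<Rightarrow> real" and g :: "'p \<Rightarrow> 'v::real_inner"
  assumes K: "compact K" and cont_\<phi>: "continuous_on K \<phi>" and cont_g: "continuous_on K g"
    and p0: "p0 \<in> K"
    and maximal: "\<And>p. p \<in> K \<Longrightarrow> \<phi> p + inner x0 (g p) \<le> \<phi> p0 + inner x0 (g p0)"
    and unique: "\<And>p. p \<in> K \<Longrightarrow> \<phi> p + inner x0 (g p) = \<phi> p0 + inner x0 (g p0) \<Longrightarrow> p = p0"
  shows "((\<lambda>x. SUP p\<in>K. \<phi> p + inner x (g p)) has_derivative inner (g p0)) (at x0)"
proof -
  define d where "d x = (SUP p\<in>K. \<phi> p + inner x (g p))" for x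
  have bdd: "bdd_above ((\<lambda>p. \<phi> p + inner x (g p)) ` K)" for x
    by (intro bounded_imp_bdd_above compact_imp_bounded compact_continuous_image
        continuous_intros cont_\<phi> cont_g K)
  have d_x0: "d x0 = \<phi> p0 + inner x0 (g p0)"
    unfolding d_def using maximal p0 by (intro cSup_eq_maximum) auto
  have lower: "d x0 + inner (g p0) (y - x0) \<le> d y" for y
  proof -
    have "\<phi> p0 + inner y (g p0) \<le> d y" unfolding d_def by (rule cSUP_upper[OF p0 bdd])
    then show ?thesis unfolding d_x0 by (simp add: inner_diff_right inner_commute)
  qed
  have "(d has_derivative inner (g p0)) (at x0)"
    unfolding has_derivative_at_alt
  proof (intro conjI allI impI bounded_linear_inner_right)
    fix e :: real assume "e > 0"
    then obtain \<delta> where "\<delta> > 0" and upper: "\<forall>y. norm (y - x0) < \<delta> \<longrightarrow>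
        d y \<le> \<phi> p0 + inner y (g p0) + e * norm (y - x0)"
      using SUP_affine_upper_estimate[of K \<phi> g p0 x0 e] K cont_\<phi> cont_g p0 maximal unique
      unfolding d_def by blast
    have tangent: "\<phi> p0 + inner y (g p0) = d x0 + inner (g p0) (y - x0)" for y
      unfolding d_x0 by (simp add: inner_diff_right inner_commute)
    show "\<exists>\<delta>>0. \<forall>y. norm (y - x0) < \<delta> \<longrightarrow>
        norm (d y - d x0 - inner (g p0) (y - x0)) \<le> e * norm (y - x0)"
    proof (intro exI[of _ \<delta>] conjI allI impI)
      fix y assume "norm (y - x0) < \<delta>"
      with upper lower[of y] show "norm (d y - d x0 - inner (g p0) (y - x0)) \<le> e * norm (y - x0)"
        unfolding tangent by auto
    qed (fact \<open>\<delta> > 0\<close>)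
  qed
  then show ?thesis unfolding d_def .
qed

lemma continuous_on_x_ln_x: "continuous_on {0..} (\<lambda>x::real. x * ln x)"
proof -
  have "continuous (at x within {0..}) (\<lambda>x::real. x * ln x)" if "x \<ge> 0" for x
  proof (cases "x = 0")
    case True
    have "((\<lambda>x::real. x * ln x) \<longlongrightarrow> 0) (at_right 0)" by real_asymp
    with True show ?thesis by (simp add: continuous_within at_within_Ici_at_right)
  next
    case False
    with that have "isCont (\<lambda>x::real. x * ln x) x" by (intro continuous_intros) auto
    then show ?thesis by (rule continuous_at_imp_continuous_within)
  qed
  then show ?thesis by (simp add: continuous_on_eq_continuous_within)
qed

lemma abs_x_ln_x_le_one:
  fixes x :: real
  assumes "0 \<le> x" "x \<le> 1"
  shows "\<bar>x * ln x\<bar> \<le> 1"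
proof (cases "x = 0")
  case False
  with assms have "0 < x" by simp
  have "- ln x \<le> 1 / x - 1"
    using ln_le_minus_one[of "1 / x"] \<open>0 < x\<close> by (simp add: ln_div)
  then have "x * - ln x \<le> x * (1 / x - 1)"
    using \<open>0 < x\<close> by (intro mult_left_mono) auto
  also have "\<dots> = 1 - x" using \<open>0 < x\<close> by (simp add: field_simps)
  finally have "- (x * ln x) \<le> 1" using assms by simp
  moreover have "x * ln x \<le> 0" using \<open>0 < x\<close> assms by (simp add: mult_nonneg_nonpos)
  ultimately show ?thesis by linarith
qed simp

lemma continuous_on_policy_entry: "continuous_on S (\<lambda>\<pi>::'s \<Rightarrow> 'a \<Rightarrow> real. \<pi> s a)"
  using continuous_on_product_then_coordinatewise[OF continuous_on_product_then_coordinatewise,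
      OF continuous_on_id] .

lemma policy_entry_le_one:
  assumes "\<pi> \<in> policies"
  shows "\<pi> s a \<le> 1"
proof -
  have "\<pi> s a \<le> (\<Sum>b\<in>UNIV. \<pi> s b)"
    using assms unfolding policies_def by (intro member_le_sum) auto
  with assms show ?thesis unfolding policies_def by auto
qed

lemma compact_policies: "compact (policies :: ('s::finite \<Rightarrow> 'a::finite \<Rightarrow> real) set)"
proof -
  define B :: "('s \<Rightarrow> 'a \<Rightarrow> real) set" where "B = PiE UNIV (\<lambda>_. PiE UNIV (\<lambda>_. {0..1}))"
  have "compact (PiE UNIV (\<lambda>_::'a. {0..1::real}))"
    using compactin_PiE[of "\<lambda>_. euclidean" UNIV "\<lambda>_. {0..1::real}"]
    by (simp add: euclidean_product_topology)
  then have "compact B"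
    using compactin_PiE[of "\<lambda>_. euclidean" UNIV "\<lambda>_. PiE UNIV (\<lambda>_::'a. {0..1::real})"]
    by (simp add: B_def euclidean_product_topology)
  moreover have "closed (policies :: ('s \<Rightarrow> 'a \<Rightarrow> real) set)"
  proof -
    have "policies = (\<Inter>s a. {\<pi>::'s \<Rightarrow> 'a \<Rightarrow> real. 0 \<le> \<pi> s a}) \<inter> (\<Inter>s. {\<pi>. (\<Sum>a\<in>UNIV. \<pi> s a) = 1})"
      unfolding policies_def by auto
    also have "closed \<dots>"
      by (intro closed_Int closed_INT ballI closed_Collect_le closed_Collect_eq continuous_intros
          continuous_on_policy_entry)
    finally show ?thesis .
  qed
  moreover have "policies \<subseteq> B"
  proof
    fix \<pi> :: "'s \<Rightarrow> 'a \<Rightarrow> real" assume "\<pi> \<in> policies"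
    with policy_entry_le_one[OF this] show "\<pi> \<in> B"
      unfolding B_def policies_def by (auto simp: PiE_UNIV_domain)
  qed
  ultimately show ?thesis by (metis compact_Int_closed inf.absorb2)
qed

lemma continuous_on_state_dist: "continuous_on S (\<lambda>\<pi>. state_dist P \<rho> \<pi> t s)"
  by (induction t arbitrary: s) (auto intro!: continuous_intros continuous_on_policy_entry)

locale finite_mdp =
  fixes P :: "'s::finite \<Rightarrow> 'a::finite \<Rightarrow> 's \<Rightarrow> real" and \<rho> :: "'s \<Rightarrow> real" and \<gamma> :: real
  assumes P_nonneg: "\<forall>s a s'. 0 \<le> P s a s'"
    and P_sum: "\<forall>s a. (\<Sum>s'\<in>UNIV. P s a s') = 1"
    and rho_nonneg: "\<forall>s. 0 \<le> \<rho> s"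
    and rho_sum: "(\<Sum>s\<in>UNIV. \<rho> s) = 1"
    and gamma: "0 < \<gamma>" "\<gamma> < 1"
begin

lemma state_dist_nonneg:
  assumes "\<pi> \<in> policies"
  shows "0 \<le> state_dist P \<rho> \<pi> t s"
  using assms P_nonneg rho_nonneg unfolding policies_def
  by (induction t arbitrary: s) (auto intro!: sum_nonneg)

lemma sum_state_dist:
  assumes "\<pi> \<in> policies"
  shows "(\<Sum>s\<in>UNIV. state_dist P \<rho> \<pi> t s) = 1"
proof (induction t)
  case (Suc t)
  let ?d = "state_dist P \<rho> \<pi> t"
  have "(\<Sum>s'\<in>UNIV. state_dist P \<rho> \<pi> (Suc t) s')
      = (\<Sum>s\<in>UNIV. \<Sum>a\<in>UNIV. ?d s * \<pi> s a * (\<Sum>s'\<in>UNIV. P s a s'))"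
    unfolding state_dist.simps sum_distrib_left
    by (subst sum.swap, rule sum.cong[OF refl], subst sum.swap) simp
  also have "\<dots> = (\<Sum>s\<in>UNIV. ?d s * (\<Sum>a\<in>UNIV. \<pi> s a))"
    using P_sum by (simp add: sum_distrib_left)
  also have "\<dots> = 1"
    using assms Suc unfolding policies_def by simp
  finally show ?case .
qed (simp add: rho_sum)

lemma abs_expectation_state_dist_le:
  fixes w :: "'s \<Rightarrow> 'a \<Rightarrow> real"
  assumes "\<pi> \<in> policies" and "\<And>s a. \<bar>w s a\<bar> \<le> B"
  shows "\<bar>\<Sum>s\<in>UNIV. \<Sum>a\<in>UNIV. state_dist P \<rho> \<pi> t s * w s a\<bar> \<le> real CARD('a) * B"
proof -
  have "\<bar>\<Sum>s\<in>UNIV. \<Sum>a\<in>UNIV. state_dist P \<rho> \<pi> t s * w s a\<bar>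
      \<le> (\<Sum>s\<in>UNIV. \<Sum>a\<in>UNIV. \<bar>state_dist P \<rho> \<pi> t s * w s a\<bar>)"
    by (rule order.trans[OF sum_abs sum_mono[OF sum_abs]])
  also have "\<dots> \<le> (\<Sum>s\<in>UNIV. \<Sum>a\<in>(UNIV :: 'a set). state_dist P \<rho> \<pi> t s * B)"
  proof (intro sum_mono)
    fix s a
    show "\<bar>state_dist P \<rho> \<pi> t s * w s a\<bar> \<le> state_dist P \<rho> \<pi> t s * B"
      using assms(2) state_dist_nonneg[OF assms(1)] by (simp add: abs_mult mult_left_mono)
  qed
  also have "\<dots> = real CARD('a) * B * (\<Sum>s\<in>UNIV. state_dist P \<rho> \<pi> t s)"
    by (simp add: sum_distrib_left mult_ac)
  also have "\<dots> = real CARD('a) * B"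
    using sum_state_dist[OF assms(1)] by simp
  finally show ?thesis .
qed

text \<open>The reward may depend on the policy and need not be bounded (as for the entropy
  reward \<open>- ln (\<pi> s a)\<close>): only its product with the action probability matters.\<close>

lemma continuous_on_disc_value_policy_dependent:
  fixes f :: "('s \<Rightarrow> 'a \<Rightarrow> real) \<Rightarrow> 's \<Rightarrow> 'a \<Rightarrow> real"
  assumes bounded: "\<And>\<pi> s a. \<pi> \<in> policies \<Longrightarrow> \<bar>\<pi> s a * f \<pi> s a\<bar> \<le> B"
    and cont: "\<And>s a. continuous_on policies (\<lambda>\<pi>. \<pi> s a * f \<pi> s a)"
  shows "continuous_on policies (\<lambda>\<pi>. disc_value P \<rho> \<gamma> \<pi> (f \<pi>))"
proof -
  define F where
    "F t \<pi> = \<gamma> ^ t * (\<Sum>s\<in>UNIV. \<Sum>a\<in>UNIV. state_dist P \<rho> \<pi> t s * (\<pi> s a * f \<pi> s a))" for t \<pi>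
  have disc_value_eq: "disc_value P \<rho> \<gamma> \<pi> (f \<pi>) = (\<Sum>t. F t \<pi>)" for \<pi>
    unfolding disc_value_def F_def by (simp add: mult.assoc)
  have "norm (F t \<pi>) \<le> \<gamma> ^ t * (real CARD('a) * B)" if "\<pi> \<in> policies" for t \<pi>
    using abs_expectation_state_dist_le[OF that bounded[OF that]] gamma
    unfolding F_def by (simp add: abs_mult mult_left_mono)
  then have "uniform_limit policies (\<lambda>n \<pi>. \<Sum>t<n. F t \<pi>) (\<lambda>\<pi>. \<Sum>t. F t \<pi>) sequentially"
    by (rule Weierstrass_m_test) (use gamma in \<open>auto intro!: summable_mult2 summable_geometric\<close>)
  then have "continuous_on policies (\<lambda>\<pi>. \<Sum>t. F t \<pi>)"
    by (rule uniform_limit_theorem[rotated])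
      (auto simp: F_def intro!: always_eventually continuous_intros continuous_on_state_dist cont)
  then show ?thesis unfolding disc_value_eq .
qed

lemma continuous_on_disc_value: "continuous_on policies (\<lambda>\<pi>. disc_value P \<rho> \<gamma> \<pi> f)"
proof -
  have "\<bar>\<pi> s a * f s a\<bar> \<le> (\<Sum>s\<in>UNIV. \<Sum>a\<in>UNIV. \<bar>f s a\<bar>)" if "\<pi> \<in> policies" for \<pi> s a
  proof -
    have "\<bar>\<pi> s a * f s a\<bar> \<le> \<bar>f s a\<bar>"
      using that policy_entry_le_one[OF that] unfolding policies_def
      by (simp add: abs_mult mult_left_le_one_le)
    also have "\<dots> \<le> (\<Sum>a\<in>UNIV. \<bar>f s a\<bar>)" by (rule member_le_sum) auto
    also have "\<dots> \<le> (\<Sum>s\<in>UNIV. \<Sum>a\<in>UNIV. \<bar>f s a\<bar>)"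
      by (rule member_le_sum[where f = "\<lambda>s. \<Sum>a\<in>UNIV. \<bar>f s a\<bar>"]) (auto intro: sum_nonneg)
    finally show ?thesis .
  qed
  moreover have "continuous_on policies (\<lambda>\<pi>. \<pi> s a * f s a)" for s a
    by (intro continuous_intros continuous_on_policy_entry)
  ultimately show ?thesis by (rule continuous_on_disc_value_policy_dependent)
qed

lemma continuous_on_disc_entropy: "continuous_on policies (\<lambda>\<pi>. disc_entropy P \<rho> \<gamma> \<pi>)"
proof -
  have "\<bar>\<pi> s a * - ln (\<pi> s a)\<bar> \<le> 1" if "\<pi> \<in> policies" for \<pi> s a
    using abs_x_ln_x_le_one[of "\<pi> s a"] that policy_entry_le_one[OF that]
    unfolding policies_def by simp
  moreover have "continuous_on policies (\<lambda>\<pi>. \<pi> s a * - ln (\<pi> s a))" for s a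
  proof -
    have "continuous_on policies (\<lambda>\<pi>. (\<lambda>x. x * ln x) (\<pi> s a))"
      by (rule continuous_on_compose2[OF continuous_on_x_ln_x continuous_on_policy_entry])
        (auto simp: policies_def)
    then show ?thesis by (simp add: continuous_on_minus)
  qed
  ultimately show ?thesis
    unfolding disc_entropy_def by (rule continuous_on_disc_value_policy_dependent)
qed

end

theorem proposition1:
  fixes P :: "'s::finite \<Rightarrow> 'a::finite \<Rightarrow> 's \<Rightarrow> real"
    and \<rho> :: "'s \<Rightarrow> real"
    and \<gamma> \<tau> \<xi> :: real
    and r0 :: "'s \<Rightarrow> 'a \<Rightarrow> real"
    and r :: "'m::finite \<Rightarrow> 's \<Rightarrow> 'a \<Rightarrow> real"
    and c :: "real ^ 'm"
  assumes P_nonneg: "\<forall>s a s'. 0 \<le> P s a s'"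
    and P_sum: "\<forall>s a. (\<Sum>s'\<in>UNIV. P s a s') = 1"
    and rho_nonneg: "\<forall>s. 0 \<le> \<rho> s"
    and rho_sum: "(\<Sum>s\<in>UNIV. \<rho> s) = 1"
    and gamma: "0 < \<gamma>" "\<gamma> < 1"
    and r0_pos: "\<forall>s a. 0 < r0 s a"
    and r_pos: "\<forall>i s a. 0 < r i s a"
    and xi_pos: "0 < \<xi>"
    and slater: "\<exists>\<pi>\<xi>\<in>policies. \<forall>i. value_vec P \<rho> \<gamma> r \<pi>\<xi> $ i \<ge> c $ i + \<xi>"
    and tau_pos: "0 < \<tau>"
    and unique: "\<forall>lam\<in>Lambda_set \<gamma> r0 \<xi>. \<exists>!\<pi>. \<pi> \<in> policies \<and>
                    lagrangian P \<rho> \<gamma> r0 r c \<tau> \<pi> lam = dual_fun P \<rho> \<gamma> r0 r c \<tau> lam"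
  shows "\<forall>lam\<in>Lambda_set \<gamma> r0 \<xi>. \<forall>\<pi>\<in>policies.
           lagrangian P \<rho> \<gamma> r0 r c \<tau> \<pi> lam = dual_fun P \<rho> \<gamma> r0 r c \<tau> lam \<longrightarrow>
           (dual_fun P \<rho> \<gamma> r0 r c \<tau> has_derivative
              (\<lambda>h. inner (value_vec P \<rho> \<gamma> r \<pi> - c) h)) (at lam)"
proof (intro ballI impI)
  fix lam \<pi> assume lam: "lam \<in> Lambda_set \<gamma> r0 \<xi>" and \<pi>: "\<pi> \<in> policies"
    and optimal: "lagrangian P \<rho> \<gamma> r0 r c \<tau> \<pi> lam = dual_fun P \<rho> \<gamma> r0 r c \<tau> lam"
  interpret finite_mdp P \<rho> \<gamma>
    using P_nonneg P_sum rho_nonneg rho_sum gamma by unfold_locales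
  define \<phi> where "\<phi> p = disc_value P \<rho> \<gamma> p r0 + \<tau> * disc_entropy P \<rho> \<gamma> p" for p
  define g where "g p = value_vec P \<rho> \<gamma> r p - c" for p
  have lagrangian_eq: "lagrangian P \<rho> \<gamma> r0 r c \<tau> p x = \<phi> p + inner x (g p)" for p x
    unfolding lagrangian_def \<phi>_def g_def by simp
  have dual_eq: "dual_fun P \<rho> \<gamma> r0 r c \<tau> = (\<lambda>x. SUP p\<in>policies. \<phi> p + inner x (g p))"
    unfolding dual_fun_def lagrangian_eq ..
  have cont_\<phi>: "continuous_on policies \<phi>"
    unfolding \<phi>_def by (intro continuous_intros continuous_on_disc_value continuous_on_disc_entropy)
  have cont_g: "continuous_on policies g"
    unfolding g_def value_vec_def by (intro continuous_intros continuous_on_disc_value)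
  have "bdd_above ((\<lambda>p. \<phi> p + inner lam (g p)) ` policies)"
    by (intro bounded_imp_bdd_above compact_imp_bounded compact_continuous_image
        continuous_intros cont_\<phi> cont_g compact_policies)
  then have maximal: "\<phi> p + inner lam (g p) \<le> \<phi> \<pi> + inner lam (g \<pi>)" if "p \<in> policies" for p
    using optimal that unfolding lagrangian_eq dual_eq by (auto intro: cSUP_upper)
  have "p = \<pi>" if "p \<in> policies" "\<phi> p + inner lam (g p) = \<phi> \<pi> + inner lam (g \<pi>)" for p
    using unique lam \<pi> optimal that unfolding lagrangian_eq by metis
  with has_derivative_SUP_affine_unique_max[OF compact_policies cont_\<phi> cont_g \<pi>] maximal
  show "(dual_fun P \<rho> \<gamma> r0 r c \<tau> has_derivative (\<lambda>h. inner (value_vec P \<rho> \<gamma> r \<pi> - c) h)) (at lam)"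
    unfolding dual_eq g_def by blast
qed

end
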